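(* The variety $\mathsf{V}(S_{(4,475)})$ is the ai-semiring variety defined by the identity $xy\approx x^2$.
   Context: An ai-semiring is an algebra $(S,+,\cdot)$ with $(S,+)$ a semilattice, $(S,\cdot)$ a semigroup, and both distributive laws. $\mathsf{V}(S)$ is the variety generated by $S$; "the ai-semiring variety defined by identities $\Sigma$" is the class of all ai-semirings satisfying $\Sigma$. $S_{(4,475)}$ has carrier $\{1,2,3,4\}$; addition: $x+x=x$, $2+x=x$, $1+x=1$ for all $x$, $3+4=1$; multiplication (row $a$, column $b$ gives $a\cdot b$): row $1$: $3,3,3,3$; row $2$: $2,2,2,2$; row $3$: $3,3,3,3$; row $4$: $3,3,3,3$. *)

theory Defs
  imports Main
begin

datatype trm = Var nat | Add trm trm | Mul trm trm

fun eval :: "('a \<Rightarrow> 'a \<Rightarrow> 'a) \<Rightarrow> ('a \<Rightarrow> 'a \<Rightarrow> 'a) \<Rightarrow> (nat \<Rightarrow> 'a) \<Rightarrow> trm \<Rightarrow> 'a" where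
  "eval ad mu \<rho> (Var n) = \<rho> n"
| "eval ad mu \<rho> (Add s t) = ad (eval ad mu \<rho> s) (eval ad mu \<rho> t)"
| "eval ad mu \<rho> (Mul s t) = mu (eval ad mu \<rho> s) (eval ad mu \<rho> t)"

definition algebra :: "'a set \<Rightarrow> ('a \<Rightarrow> 'a \<Rightarrow> 'a) \<Rightarrow> ('a \<Rightarrow> 'a \<Rightarrow> 'a) \<Rightarrow> bool" where
  "algebra C ad mu \<longleftrightarrow> (\<forall>x\<in>C. \<forall>y\<in>C. ad x y \<in> C \<and> mu x y \<in> C)"

definition satisfies :: "'a set \<Rightarrow> ('a \<Rightarrow> 'a \<Rightarrow> 'a) \<Rightarrow> ('a \<Rightarrow> 'a \<Rightarrow> 'a) \<Rightarrow> trm \<Rightarrow> trm \<Rightarrow> bool" where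
  "satisfies C ad mu p q \<longleftrightarrow>
     (\<forall>\<rho>. (\<forall>n. \<rho> n \<in> C) \<longrightarrow> eval ad mu \<rho> p = eval ad mu \<rho> q)"

definition ai_semiring :: "'a set \<Rightarrow> ('a \<Rightarrow> 'a \<Rightarrow> 'a) \<Rightarrow> ('a \<Rightarrow> 'a \<Rightarrow> 'a) \<Rightarrow> bool" where
  "ai_semiring C ad mu \<longleftrightarrow> algebra C ad mu \<and>
     (\<forall>x\<in>C. \<forall>y\<in>C. \<forall>z\<in>C.
        ad (ad x y) z = ad x (ad y z) \<and> ad x y = ad y x \<and> ad x x = x \<and>
        mu (mu x y) z = mu x (mu y z) \<and>
        mu x (ad y z) = ad (mu x y) (mu x z) \<and>
        mu (ad x y) z = ad (mu x z) (mu y z))"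

definition S_carrier :: "nat set" where "S_carrier = {1,2,3,4}"

definition S_add :: "nat \<Rightarrow> nat \<Rightarrow> nat" where
  "S_add a b = (if a = b then a else if a = 2 then b else if b = 2 then a else 1)"

definition S_mul :: "nat \<Rightarrow> nat \<Rightarrow> nat" where
  "S_mul a b = (if a = 2 then 2 else 3)"

text \<open>Variety generated by S: the smallest equational class containing S,
  i.e. all algebras (of the signature) satisfying every identity of S (Birkhoff).\<close>
definition in_V_S :: "'a set \<Rightarrow> ('a \<Rightarrow> 'a \<Rightarrow> 'a) \<Rightarrow> ('a \<Rightarrow> 'a \<Rightarrow> 'a) \<Rightarrow> bool" where
  "in_V_S C ad mu \<longleftrightarrow> algebra C ad mu \<and>
     (\<forall>p q. satisfies S_carrier S_add S_mul p q \<longrightarrow> satisfies C ad mu p q)"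

end

theory Submission
  imports Defs
begin

text \<open>Under \<open>xy = x\<^sup>2\<close> one has \<open>(u + v)\<^sup>2 = u\<^sup>2 + v\<^sup>2\<close> and \<open>(uv)\<^sup>2 = u\<^sup>2\<close>, so every
  term t takes the value \<open>(\<Sum>a\<in>A. x\<^sub>a) + (\<Sum>b\<in>B. x\<^sub>b\<^sup>2)\<close> with A = lin_vars t and
  B = sq_vars t. As A or B may be empty, this normal form is expressed through the
  semilattice order: c lies above the value of t exactly when it lies above every
  summand. Hence terms with equal A and B agree in every ai-semiring satisfying
  \<open>xy = x\<^sup>2\<close>. Conversely, in S_(4,475) the valuation sending one variable v to 4 and
  all others to 2 maps t to 4, 3, 1 or 2 according as v lies only in A, only in B,
  in both, or in neither; so the identities of S_(4,475) preserve A and B.\<close>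

fun lin_vars :: "trm \<Rightarrow> nat set" where
  "lin_vars (Var n) = {n}"
| "lin_vars (Add s t) = lin_vars s \<union> lin_vars t"
| "lin_vars (Mul s t) = {}"

fun sq_vars :: "trm \<Rightarrow> nat set" where
  "sq_vars (Var n) = {}"
| "sq_vars (Add s t) = sq_vars s \<union> sq_vars t"
| "sq_vars (Mul s t) = lin_vars s \<union> sq_vars s"

definition ai_identities :: "(trm \<times> trm) set" where
  "ai_identities =
    (let x = Var 0; y = Var 1; z = Var 2 in
     {(Add (Add x y) z, Add x (Add y z)), (Add x y, Add y x), (Add x x, x),
      (Mul (Mul x y) z, Mul x (Mul y z)),
      (Mul x (Add y z), Add (Mul x y) (Mul x z)),
      (Mul (Add x y) z, Add (Mul x z) (Mul y z))})"

lemma eval_closed: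
  assumes "algebra C ad mu" "\<forall>n. \<rho> n \<in> C"
  shows "eval ad mu \<rho> t \<in> C"
  using assms by (induction t) (auto simp: algebra_def)

lemma satisfies_three_vars:
  assumes "satisfies C ad mu p q" "x \<in> C" "y \<in> C" "z \<in> C"
  shows "eval ad mu (\<lambda>n. if n = 0 then x else if n = 1 then y else z) p =
         eval ad mu (\<lambda>n. if n = 0 then x else if n = 1 then y else z) q"
  using assms unfolding satisfies_def by auto

lemma ai_semiring_iff_satisfies_ai_identities:
  assumes "algebra C ad mu"
  shows "ai_semiring C ad mu \<longleftrightarrow> (\<forall>(p, q) \<in> ai_identities. satisfies C ad mu p q)"
proof
  assume "ai_semiring C ad mu"
  then have ax: "ad (ad x y) z = ad x (ad y z) \<and> ad x y = ad y x \<and> ad x x = x \<and>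
      mu (mu x y) z = mu x (mu y z) \<and> mu x (ad y z) = ad (mu x y) (mu x z) \<and>
      mu (ad x y) z = ad (mu x z) (mu y z)" if "x \<in> C" "y \<in> C" "z \<in> C" for x y z
    using that unfolding ai_semiring_def by blast
  have "satisfies C ad mu p q" if "(p, q) \<in> ai_identities" for p q
    unfolding satisfies_def
  proof (intro allI impI)
    fix \<rho> :: "nat \<Rightarrow> 'a" assume "\<forall>n. \<rho> n \<in> C"
    then have "\<rho> 0 \<in> C" "\<rho> 1 \<in> C" "\<rho> 2 \<in> C" by blast+
    from ax[OF this] that show "eval ad mu \<rho> p = eval ad mu \<rho> q"
      by (auto simp: ai_identities_def Let_def)
  qed
  then show "\<forall>(p, q) \<in> ai_identities. satisfies C ad mu p q"
    by blast
next
  assume sat: "\<forall>(p, q) \<in> ai_identities. satisfies C ad mu p q"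
  have "ad (ad x y) z = ad x (ad y z) \<and> ad x y = ad y x \<and> ad x x = x \<and>
      mu (mu x y) z = mu x (mu y z) \<and> mu x (ad y z) = ad (mu x y) (mu x z) \<and>
      mu (ad x y) z = ad (mu x z) (mu y z)" if xyz: "x \<in> C" "y \<in> C" "z \<in> C" for x y z
  proof -
    let ?\<rho> = "\<lambda>n. if n = 0 then x else if n = 1 then y else z"
    have "\<forall>(p, q) \<in> ai_identities. eval ad mu ?\<rho> p = eval ad mu ?\<rho> q"
      using sat satisfies_three_vars[OF _ xyz] by fast
    then show ?thesis
      by (simp add: ai_identities_def Let_def) metis
  qed
  with assms show "ai_semiring C ad mu"
    unfolding ai_semiring_def by blast
qed

lemma ai_semiring_if_satisfies_identities_of:
  assumes "ai_semiring C' ad' mu'" "algebra C ad mu"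
    and "\<And>p q. satisfies C' ad' mu' p q \<Longrightarrow> satisfies C ad mu p q"
  shows "ai_semiring C ad mu"
proof -
  have "algebra C' ad' mu'"
    using assms(1) by (simp add: ai_semiring_def)
  with assms show ?thesis
    by (fastforce simp: ai_semiring_iff_satisfies_ai_identities)
qed

lemma satisfies_mul_eq_square_iff:
  "satisfies C ad mu (Mul (Var 0) (Var 1)) (Mul (Var 0) (Var 0)) \<longleftrightarrow>
   (\<forall>x \<in> C. \<forall>y \<in> C. mu x y = mu x x)"
proof
  assume sat: "satisfies C ad mu (Mul (Var 0) (Var 1)) (Mul (Var 0) (Var 0))"
  show "\<forall>x \<in> C. \<forall>y \<in> C. mu x y = mu x x"
  proof (intro ballI)
    fix x y assume "x \<in> C" "y \<in> C"
    from satisfies_three_vars[OF sat this \<open>y \<in> C\<close>] show "mu x y = mu x x"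
      by simp
  qed
next
  assume "\<forall>x \<in> C. \<forall>y \<in> C. mu x y = mu x x"
  then show "satisfies C ad mu (Mul (Var 0) (Var 1)) (Mul (Var 0) (Var 0))"
    unfolding satisfies_def eval.simps by blast
qed

locale ai_semiring_carrier =
  fixes C :: "'a set" and ad mu :: "'a \<Rightarrow> 'a \<Rightarrow> 'a"
  assumes ai_semiring: "ai_semiring C ad mu"
begin

abbreviation below :: "'a \<Rightarrow> 'a \<Rightarrow> bool" where
  "below x c \<equiv> ad x c = c"

lemma algebra: "algebra C ad mu"
  using ai_semiring by (simp add: ai_semiring_def)

lemma add_closed: "x \<in> C \<Longrightarrow> y \<in> C \<Longrightarrow> ad x y \<in> C"
  and mul_closed: "x \<in> C \<Longrightarrow> y \<in> C \<Longrightarrow> mu x y \<in> C"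
  using algebra by (auto simp: algebra_def)

lemma add_assoc: "x \<in> C \<Longrightarrow> y \<in> C \<Longrightarrow> z \<in> C \<Longrightarrow> ad (ad x y) z = ad x (ad y z)"
  and add_commute: "x \<in> C \<Longrightarrow> y \<in> C \<Longrightarrow> ad x y = ad y x"
  and add_idem: "x \<in> C \<Longrightarrow> ad x x = x"
  and mul_assoc: "x \<in> C \<Longrightarrow> y \<in> C \<Longrightarrow> z \<in> C \<Longrightarrow> mu (mu x y) z = mu x (mu y z)"
  and distrib_right: "x \<in> C \<Longrightarrow> y \<in> C \<Longrightarrow> z \<in> C \<Longrightarrow> mu (ad x y) z = ad (mu x z) (mu y z)"
  using ai_semiring by (simp_all add: ai_semiring_def)

lemma below_if_add_below:
  assumes "x \<in> C" "y \<in> C" "c \<in> C" "below (ad x y) c"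
  shows "below x c"
proof -
  have "ad x c = ad x (ad (ad x y) c)"
    using assms(4) by simp
  also have "\<dots> = ad (ad (ad x x) y) c"
    using assms(1-3) by (simp add: add_assoc add_closed)
  also have "\<dots> = c"
    using assms by (simp add: add_idem)
  finally show ?thesis .
qed

lemma add_below_iff:
  assumes "x \<in> C" "y \<in> C" "c \<in> C"
  shows "below (ad x y) c \<longleftrightarrow> below x c \<and> below y c"
proof
  assume "below (ad x y) c"
  moreover from this have "below (ad y x) c"
    using assms by (simp add: add_commute)
  ultimately show "below x c \<and> below y c"
    using below_if_add_below assms by blast
next
  assume "below x c \<and> below y c"
  then show "below (ad x y) c"
    using assms by (simp add: add_assoc)
qed

lemma below_antisym: "x \<in> C \<Longrightarrow> y \<in> C \<Longrightarrow> below x y \<Longrightarrow> below y x \<Longrightarrow> x = y"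
  using add_commute by metis

end

locale ai_semiring_xy_x2 = ai_semiring_carrier +
  assumes mul_eq_square: "x \<in> C \<Longrightarrow> y \<in> C \<Longrightarrow> mu x y = mu x x"
begin

lemma square_add: "x \<in> C \<Longrightarrow> y \<in> C \<Longrightarrow> mu (ad x y) (ad x y) = ad (mu x x) (mu y y)"
  by (metis add_closed distrib_right mul_eq_square)

lemma square_mul: "x \<in> C \<Longrightarrow> y \<in> C \<Longrightarrow> mu (mu x y) (mu x y) = mu x x"
  by (metis mul_assoc mul_closed mul_eq_square)

context
  fixes \<rho> :: "nat \<Rightarrow> 'a" and c :: 'a
  assumes \<rho>: "\<forall>n. \<rho> n \<in> C" and c: "c \<in> C"
begin

lemma square_eval_below_iff:
  "below (mu (eval ad mu \<rho> t) (eval ad mu \<rho> t)) c \<longleftrightarrow>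
   (\<forall>a \<in> lin_vars t \<union> sq_vars t. below (mu (\<rho> a) (\<rho> a)) c)"
proof (induction t)
  case (Var n)
  then show ?case by simp
next
  case (Add s t)
  with eval_closed[OF algebra \<rho>] show ?case
    by (auto simp: square_add add_below_iff[OF mul_closed mul_closed c])
next
  case (Mul s t)
  with eval_closed[OF algebra \<rho>] show ?case
    by (simp add: square_mul)
qed

lemma eval_below_iff:
  "below (eval ad mu \<rho> t) c \<longleftrightarrow>
   (\<forall>a \<in> lin_vars t. below (\<rho> a) c) \<and> (\<forall>b \<in> sq_vars t. below (mu (\<rho> b) (\<rho> b)) c)"
proof (induction t)
  case (Var n)
  then show ?case by simp
next
  case (Add s t)
  with eval_closed[OF algebra \<rho>] show ?case
    by (auto simp: add_below_iff[OF _ _ c])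
next
  case (Mul s t)
  have "mu (eval ad mu \<rho> s) (eval ad mu \<rho> t) = mu (eval ad mu \<rho> s) (eval ad mu \<rho> s)"
    using eval_closed[OF algebra \<rho>] mul_eq_square by blast
  then show ?case
    by (simp add: square_eval_below_iff)
qed

end

lemma eval_eq_if_vars_eq:
  assumes \<rho>: "\<forall>n. \<rho> n \<in> C" and "lin_vars p = lin_vars q" "sq_vars p = sq_vars q"
  shows "eval ad mu \<rho> p = eval ad mu \<rho> q"
proof (rule below_antisym)
  show p: "eval ad mu \<rho> p \<in> C" and q: "eval ad mu \<rho> q \<in> C"
    using eval_closed[OF algebra \<rho>] by auto
  have eval_below_self: "below (eval ad mu \<rho> t) (eval ad mu \<rho> t)" for t
    using eval_closed[OF algebra \<rho>] add_idem by blast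
  show "below (eval ad mu \<rho> p) (eval ad mu \<rho> q)"
    using eval_below_iff[OF \<rho> q, of p] eval_below_iff[OF \<rho> q, of q] eval_below_self[of q] assms(2,3)
    by simp
  show "below (eval ad mu \<rho> q) (eval ad mu \<rho> p)"
    using eval_below_iff[OF \<rho> p, of p] eval_below_iff[OF \<rho> p, of q] eval_below_self[of p] assms(2,3)
    by simp
qed

end

lemma S_ai_semiring: "ai_semiring S_carrier S_add S_mul"
  unfolding ai_semiring_def algebra_def S_carrier_def S_add_def S_mul_def by auto

lemma S_mul_eq_square: "satisfies S_carrier S_add S_mul (Mul (Var 0) (Var 1)) (Mul (Var 0) (Var 0))"
  unfolding satisfies_mul_eq_square_iff by (simp add: S_mul_def)

lemma S_eval_marked_var:
  "eval S_add S_mul (\<lambda>n. if n = v then 4 else 2) t =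
    (if v \<in> lin_vars t \<and> v \<in> sq_vars t then 1
     else if v \<in> lin_vars t then 4 else if v \<in> sq_vars t then 3 else 2)"
  by (induction t) (auto simp: S_add_def S_mul_def)

lemma S_satisfies_imp_vars_eq:
  assumes "satisfies S_carrier S_add S_mul p q"
  shows "lin_vars p = lin_vars q \<and> sq_vars p = sq_vars q"
proof -
  have marked: "eval S_add S_mul (\<lambda>n. if n = v then 4 else 2) p =
                eval S_add S_mul (\<lambda>n. if n = v then 4 else 2) q" for v
    using assms by (simp add: satisfies_def S_carrier_def)
  have "(v \<in> lin_vars p \<longleftrightarrow> v \<in> lin_vars q) \<and> (v \<in> sq_vars p \<longleftrightarrow> v \<in> sq_vars q)" for v
    using marked[of v] unfolding S_eval_marked_var by (simp split: if_splits)
  then show ?thesis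
    by blast
qed

theorem proposition4p5:
  fixes C :: "'a set" and ad mu :: "'a \<Rightarrow> 'a \<Rightarrow> 'a"
  assumes "algebra C ad mu"
  shows "in_V_S C ad mu \<longleftrightarrow>
           (ai_semiring C ad mu \<and>
            satisfies C ad mu (Mul (Var 0) (Var 1)) (Mul (Var 0) (Var 0)))"
proof
  assume "in_V_S C ad mu"
  then have S_ids: "satisfies C ad mu p q" if "satisfies S_carrier S_add S_mul p q" for p q
    using that by (simp add: in_V_S_def)
  have "ai_semiring C ad mu"
    using ai_semiring_if_satisfies_identities_of[OF S_ai_semiring assms] S_ids .
  with S_ids[OF S_mul_eq_square]
  show "ai_semiring C ad mu \<and> satisfies C ad mu (Mul (Var 0) (Var 1)) (Mul (Var 0) (Var 0))"
    by blast
next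
  assume "ai_semiring C ad mu \<and> satisfies C ad mu (Mul (Var 0) (Var 1)) (Mul (Var 0) (Var 0))"
  then interpret ai_semiring_xy_x2 C ad mu
    unfolding satisfies_mul_eq_square_iff by unfold_locales blast+
  show "in_V_S C ad mu"
    unfolding in_V_S_def
  proof (intro conjI allI impI assms)
    fix p q assume "satisfies S_carrier S_add S_mul p q"
    then have "lin_vars p = lin_vars q" "sq_vars p = sq_vars q"
      using S_satisfies_imp_vars_eq by blast+
    then show "satisfies C ad mu p q"
      unfolding satisfies_def using eval_eq_if_vars_eq by blast
  qed
qed

end
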